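(* Let $\mathcal I\in\mathbb Q^{n\times n\times n_3}$ be the identity quaternion tensor. Then for every $\mathcal A\in\mathbb Q^{n\times n\times n_3}$, $\mathcal I+\mathcal A$ is invertible if and only if $I_{nn_3}+\mathtt{bcirc_z}(\mathcal A)$ is invertible.
   Context: $\mathbb Q$ denotes the real quaternions with the usual Hamilton multiplication; $\mathbb C$ is identified with $\{a_0+a_1\mathbf i\}$. Every quaternion array $A=A_0+A_1\mathbf i+A_2\mathbf j+A_3\mathbf k$ (real $A_t$) is written uniquely as $A=A_{\mathbf d}+\mathbf jA_{\mathbf c}$ with $A_{\mathbf d}=A_0+A_1\mathbf i$, $A_{\mathbf c}=A_2-A_3\mathbf i$. For $\mathcal A\in\mathbb Q^{n_1\times n_2\times n_3}$, $\mathcal A^{(s)}=\mathcal A(:,:,s)$. For a complex tensor $\mathcal C$, $\mathtt{bcirc}(\mathcal C)$ is the block circulant matrix with $(p,q)$ block $\mathcal C^{(((p-q)\bmod n_3)+1)}$. $P_{n_3}$ is the permutation matrix with first row $e_1^T$ and $r$-th row $e_{n_3+2-r}^T$ ($r\ge2$). $\mathtt{bcirc_z}(\mathcal A)=\mathtt{bcirc}(\mathcal A_{\mathbf d})+\mathbf j\,\mathtt{bcirc}(\mathcal A_{\mathbf c})(P_{n_3}\otimes I_{n_2})$. $\mathtt{unfold}(\mathcal B)=[\mathcal B^{(1)};\dots;\mathcal B^{(n_3)}]$, $\mathtt{fold}$ its inverse; QT-product $\mathcal A*_Q\mathcal B=\mathtt{fold}(\mathtt{bcirc_z}(\mathcal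 A)\mathtt{unfold}(\mathcal B))$. The identity tensor $\mathcal I$ has first frontal slice $I_n$ and all other frontal slices zero. A tensor $\mathcal M$ is invertible if there is $\mathcal N$ with $\mathcal M*_Q\mathcal N=\mathcal N*_Q\mathcal M=\mathcal I$. *)

theory Defs
  imports Complex_Main "Jordan_Normal_Form.Matrix"
begin

datatype quat = Quat (q0: real) (q1: real) (q2: real) (q3: real)

lemma quat_eqI: "q0 a = q0 b \<Longrightarrow> q1 a = q1 b \<Longrightarrow> q2 a = q2 b \<Longrightarrow> q3 a = q3 b \<Longrightarrow> a = b"
  by (cases a, cases b) simp

instantiation quat :: ring_1
begin
definition "0 = Quat 0 0 0 0"
definition "1 = Quat 1 0 0 0"
definition "a + b = Quat (q0 a + q0 b) (q1 a + q1 b) (q2 a + q2 b) (q3 a + q3 b)"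
definition "a - b = Quat (q0 a - q0 b) (q1 a - q1 b) (q2 a - q2 b) (q3 a - q3 b)"
definition "- a = Quat (- q0 a) (- q1 a) (- q2 a) (- q3 a)"
definition "a * b = Quat
   (q0 a * q0 b - q1 a * q1 b - q2 a * q2 b - q3 a * q3 b)
   (q0 a * q1 b + q1 a * q0 b + q2 a * q3 b - q3 a * q2 b)
   (q0 a * q2 b - q1 a * q3 b + q2 a * q0 b + q3 a * q1 b)
   (q0 a * q3 b + q1 a * q2 b - q2 a * q1 b + q3 a * q0 b)"
instance
  by standard (auto intro!: quat_eqI simp: zero_quat_def one_quat_def plus_quat_def
      minus_quat_def uminus_quat_def times_quat_def algebra_simps)
end

definition qi :: quat where "qi = Quat 0 1 0 0"
definition qj :: quat where "qj = Quat 0 0 1 0"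

definition of_cplx :: "complex \<Rightarrow> quat" where
  "of_cplx z = Quat (Re z) (Im z) 0 0"

text \<open>A = A_d + j A_c with A_d = A0 + A1 i, A_c = A2 - A3 i.\<close>
definition quat_d :: "quat \<Rightarrow> complex" where "quat_d a = Complex (q0 a) (q1 a)"
definition quat_c :: "quat \<Rightarrow> complex" where "quat_c a = Complex (q2 a) (- q3 a)"

text \<open>A tensor in K^(n1 x n2 x n3) is represented by the list of its n3 frontal slices
  (each an n1 x n2 matrix); the slice A^(s) (1-indexed) is A ! (s-1).\<close>

definition is_tensor :: "nat \<Rightarrow> nat \<Rightarrow> nat \<Rightarrow> 'a mat list \<Rightarrow> bool" where
  "is_tensor n1 n2 n3 A \<longleftrightarrow> length A = n3 \<and> (\<forall>s<n3. A ! s \<in> carrier_mat n1 n2)"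

definition tensor_d :: "quat mat list \<Rightarrow> complex mat list" where
  "tensor_d A = map (map_mat quat_d) A"

definition tensor_c :: "quat mat list \<Rightarrow> complex mat list" where
  "tensor_c A = map (map_mat quat_c) A"

definition bcirc :: "nat \<Rightarrow> nat \<Rightarrow> nat \<Rightarrow> complex mat list \<Rightarrow> complex mat" where
  "bcirc n1 n2 n3 C = mat (n1 * n3) (n2 * n3) (\<lambda>(i, j).
     (C ! nat ((int (i div n1) - int (j div n2)) mod int n3)) $$ (i mod n1, j mod n2))"

text \<open>P_{n3}: first row e_1, r-th row e_{n3+2-r} (r >= 2); 0-indexed: row r has its 1 in
  column (n3 - r) mod n3.\<close>
definition perm_P :: "nat \<Rightarrow> complex mat" where
  "perm_P n3 = mat n3 n3 (\<lambda>(r, c). if c = (n3 - r) mod n3 then 1 else 0)"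

definition kron :: "complex mat \<Rightarrow> complex mat \<Rightarrow> complex mat" where
  "kron A B = mat (dim_row A * dim_row B) (dim_col A * dim_col B) (\<lambda>(i, j).
     A $$ (i div dim_row B, j div dim_col B) * B $$ (i mod dim_row B, j mod dim_col B))"

definition bcirc_z :: "nat \<Rightarrow> nat \<Rightarrow> nat \<Rightarrow> quat mat list \<Rightarrow> quat mat" where
  "bcirc_z n1 n2 n3 A =
     map_mat of_cplx (bcirc n1 n2 n3 (tensor_d A))
     + map_mat (\<lambda>x. qj * x)
         (map_mat of_cplx (bcirc n1 n2 n3 (tensor_c A) * kron (perm_P n3) (1\<^sub>m n2)))"

definition unfold_t :: "nat \<Rightarrow> nat \<Rightarrow> nat \<Rightarrow> 'a mat list \<Rightarrow> 'a mat" where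
  "unfold_t n1 n2 n3 B = mat (n1 * n3) n2 (\<lambda>(i, j). (B ! (i div n1)) $$ (i mod n1, j))"

definition fold_t :: "nat \<Rightarrow> nat \<Rightarrow> nat \<Rightarrow> 'a mat \<Rightarrow> 'a mat list" where
  "fold_t n1 n2 n3 M = map (\<lambda>s. mat n1 n2 (\<lambda>(i, j). M $$ (s * n1 + i, j))) [0..<n3]"

definition qt_prod :: "nat \<Rightarrow> nat \<Rightarrow> nat \<Rightarrow> nat \<Rightarrow> quat mat list \<Rightarrow> quat mat list \<Rightarrow> quat mat list" where
  "qt_prod n1 n2 m n3 A B = fold_t n1 m n3 (bcirc_z n1 n2 n3 A * unfold_t n2 m n3 B)"

definition ident_tensor :: "nat \<Rightarrow> nat \<Rightarrow> quat mat list" where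
  "ident_tensor n n3 = 1\<^sub>m n # replicate (n3 - 1) (0\<^sub>m n n)"

definition tensor_add :: "'a::plus mat list \<Rightarrow> 'a mat list \<Rightarrow> 'a mat list" where
  "tensor_add A B = map2 (+) A B"

definition qt_invertible :: "nat \<Rightarrow> nat \<Rightarrow> quat mat list \<Rightarrow> bool" where
  "qt_invertible n n3 M \<longleftrightarrow> (\<exists>N. is_tensor n n n3 N \<and>
      qt_prod n n n n3 M N = ident_tensor n n3 \<and> qt_prod n n n n3 N M = ident_tensor n n3)"

end

theory Submission
  imports Defs
begin

(* Split every quaternion as x = x_d + x_j with x_d in C and x_j in jC. This is a Z/2-grading:
   products of like parts lie in C, products of unlike parts in jC. Reading off the definition
   (P_{n3} turns the block column q into the column -q mod n3), the (p,q) block of bcirc_z(A)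
   is (A^(p-q))_d + (A^(p+q))_j, frontal slices indexed cyclically from 0. With this formula and
   the grading, a cyclic reindexing of the block sums shows that bcirc_z turns the QT-product into
   the matrix product; it is also additive, sends the identity tensor to the identity matrix, and
   unfold(A) = bcirc_z(A) unfold(I). Hence a tensor inverse of M gives a matrix inverse of
   bcirc_z(M), and conversely, if B inverts bcirc_z(M), then fold(B unfold(I)) inverts M. *)

section \<open>Quaternion parts\<close>

definition quat_dpart :: "quat \<Rightarrow> quat" where
  "quat_dpart x = of_cplx (quat_d x)"

definition quat_jpart :: "quat \<Rightarrow> quat" where
  "quat_jpart x = qj * of_cplx (quat_c x)"

lemma quat_dpart_Quat: "quat_dpart x = Quat (q0 x) (q1 x) 0 0"
  by (simp add: quat_dpart_def of_cplx_def quat_d_def)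

lemma quat_jpart_Quat: "quat_jpart x = Quat 0 0 (q2 x) (q3 x)"
  by (simp add: quat_jpart_def of_cplx_def quat_c_def qj_def times_quat_def)

lemmas quat_part_simps = quat_dpart_Quat quat_jpart_Quat
  zero_quat_def one_quat_def plus_quat_def times_quat_def

lemma quat_dpart_plus_jpart: "quat_dpart x + quat_jpart x = x"
  by (cases x) (simp add: quat_part_simps)

lemma quat_dpart_add [simp]: "quat_dpart (x + y) = quat_dpart x + quat_dpart y"
  and quat_jpart_add [simp]: "quat_jpart (x + y) = quat_jpart x + quat_jpart y"
  by (simp_all add: quat_part_simps)

lemma quat_dpart_mult: "quat_dpart (x * y) = quat_dpart x * quat_dpart y + quat_jpart x * quat_jpart y"
  and quat_jpart_mult: "quat_jpart (x * y) = quat_dpart x * quat_jpart y + quat_jpart x * quat_dpart y"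
  by (simp_all add: quat_part_simps)

lemma quat_parts_idem [simp]:
  "quat_dpart (quat_dpart x) = quat_dpart x" "quat_jpart (quat_jpart x) = quat_jpart x"
  "quat_dpart (quat_jpart x) = 0" "quat_jpart (quat_dpart x) = 0"
  by (simp_all add: quat_part_simps)

lemma quat_parts_0_1 [simp]:
  "quat_dpart 0 = 0" "quat_jpart 0 = 0" "quat_dpart 1 = 1" "quat_jpart 1 = 0"
  by (simp_all add: quat_part_simps)

lemma quat_dpart_sum: "quat_dpart (sum f S) = (\<Sum>x\<in>S. quat_dpart (f x))"
  and quat_jpart_sum: "quat_jpart (sum f S) = (\<Sum>x\<in>S. quat_jpart (f x))"
  by (induction S rule: infinite_finite_induct) auto

lemma block_index_less:
  assumes "a < n" "p < m"
  shows "p * n + a < n * (m::nat)"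
proof -
  have "p * n + a < (p + 1) * n" using assms(1) by simp
  also have "\<dots> \<le> m * n" using assms(2) by (intro mult_right_mono) auto
  finally show ?thesis by (simp add: mult.commute)
qed

lemma block_index_cases:
  assumes "i < n * (m::nat)"
  obtains p a where "i = p * n + a" "p < m" "a < n"
proof
  show "i = i div n * n + i mod n" by simp
  show "i div n < m" "i mod n < n"
    using assms by (auto simp: less_mult_imp_div_less mult.commute intro!: mod_less_divisor Nat.gr0I)
qed

lemma block_index_eq_iff:
  assumes "a < n" "b < n"
  shows "p * n + a = q * n + b \<longleftrightarrow> p = q \<and> a = (b::nat)"
  using assms by (metis add.commute div_mult_self1 div_less mod_mult_self1 mod_less add_0 not_less0)

lemma sum_lessThan_mult_blocks: "(\<Sum>k<n * m. f k) = (\<Sum>p<m. \<Sum>a<n. f (p * n + (a::nat)))"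
proof -
  have "(\<Sum>k<n * m. f k) = (\<Sum>p<m. \<Sum>k\<in>{p * n..<p * n + n}. f k)"
    by (simp add: sum.nat_group mult.commute)
  also have "\<dots> = (\<Sum>p<m. \<Sum>a<n. f (p * n + a))"
    by (simp add: sum.shift_bounds_nat_ivl[of f 0 "p * n" n for p, simplified] atLeast0LessThan add.commute)
  finally show ?thesis .
qed

lemma index_mult_mat_blocks:
  assumes "A \<in> carrier_mat k (n * m)" "B \<in> carrier_mat (n * m) l" "i < k" "j < l"
  shows "(A * B) $$ (i, j) = (\<Sum>p<m. \<Sum>a<n. A $$ (i, p * n + a) * B $$ (p * n + a, j))"
  using assms by (simp add: scalar_prod_def atLeast0LessThan sum_lessThan_mult_blocks block_index_less)

lemma eq_mat_blocksI:
  assumes "A \<in> carrier_mat (n1 * n3) (n2 * n3)" "B \<in> carrier_mat (n1 * n3) (n2 * n3)"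
    and "\<And>p a q b. p < n3 \<Longrightarrow> q < n3 \<Longrightarrow> a < n1 \<Longrightarrow> b < n2 \<Longrightarrow>
           A $$ (p * n1 + a, q * n2 + b) = B $$ (p * n1 + a, q * n2 + b)"
  shows "A = B"
proof (rule eq_matI)
  fix i j assume "i < dim_row B" "j < dim_col B"
  with assms(2) obtain p a q b where "i = p * n1 + a" "p < n3" "a < n1" "j = q * n2 + b" "q < n3" "b < n2"
    by (auto elim!: block_index_cases)
  then show "A $$ (i, j) = B $$ (i, j)" using assms(3) by simp
qed (use assms in auto)

lemma nat_mod_less: "0 < n3 \<Longrightarrow> nat (k mod int n3) < n3"
  by (simp add: nat_less_iff)

lemma diff_mod_eq_0_iff:
  "p < n \<Longrightarrow> q < n \<Longrightarrow> (int p - int q) mod int n = 0 \<longleftrightarrow> p = q"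
  by (metis mod_eq_dvd_iff dvd_eq_mod_eq_0 mod_less of_nat_mod of_nat_eq_iff)

lemma diff_reflected_index_mod:
  "q < n3 \<Longrightarrow> (int p - int ((n3 - q) mod n3)) mod int n3 = (int p + int q) mod int n3"
  by (simp add: zmod_int of_nat_diff mod_diff_right_eq)

lemma sum_lessThan_shift_periodic:
  fixes g :: "int \<Rightarrow> 'a::comm_monoid_add"
  assumes periodic: "\<And>t. g (t mod int m) = g t"
  shows "(\<Sum>r<m. g (int r + c)) = (\<Sum>r<m. g (int r))"
proof (rule sum.reindex_bij_witness[where j = "\<lambda>r. nat ((int r + c) mod int m)"
                                       and i = "\<lambda>r. nat ((int r - c) mod int m)"])
  fix r assume "r \<in> {..<m}"
  then have m: "0 < m" by simp
  show "nat ((int r + c) mod int m) \<in> {..<m}" "nat ((int r - c) mod int m) \<in> {..<m}"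
    using m by (simp_all add: nat_mod_less)
  show "nat ((int (nat ((int r + c) mod int m)) - c) mod int m) = r"
    using m \<open>r \<in> {..<m}\<close> by (simp add: mod_diff_left_eq)
  show "nat ((int (nat ((int r - c) mod int m)) + c) mod int m) = r"
    using m \<open>r \<in> {..<m}\<close> by (simp add: mod_add_left_eq)
  show "g (int (nat ((int r + c) mod int m))) = g (int r + c)"
    using m by (simp add: periodic)
qed

definition cslice :: "nat \<Rightarrow> 'a mat list \<Rightarrow> int \<Rightarrow> 'a mat" where
  "cslice n3 X k = X ! nat (k mod int n3)"

lemma cslice_cong: "k mod int n3 = l mod int n3 \<Longrightarrow> cslice n3 X k = cslice n3 X l"
  by (simp add: cslice_def)

lemma cslice_mod [simp]: "cslice n3 X (k mod int n3) = cslice n3 X k"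
  by (simp add: cslice_def)

lemma cslice_periodic [simp]:
  "cslice n3 X (u + t mod int n3) = cslice n3 X (u + t)"
  "cslice n3 X (u - t mod int n3) = cslice n3 X (u - t)"
  by (auto intro!: cslice_cong simp: mod_add_right_eq mod_diff_right_eq)

lemma cslice_of_nat: "p < n3 \<Longrightarrow> cslice n3 X (int p) = X ! p"
  by (simp add: cslice_def)

lemma cslice_carrier:
  "0 < n3 \<Longrightarrow> is_tensor n1 n2 n3 X \<Longrightarrow> cslice n3 X k \<in> carrier_mat n1 n2"
  by (simp add: cslice_def is_tensor_def nat_mod_less)

lemma sum_cslice_shift:
  fixes f :: "'a mat \<Rightarrow> 'b mat \<Rightarrow> 'c::comm_monoid_add"
  shows "(\<Sum>r<n3. f (cslice n3 X (u - int r)) (cslice n3 Y (int r + c)))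
       = (\<Sum>r<n3. f (cslice n3 X (u + c - int r)) (cslice n3 Y (int r)))"
    and "(\<Sum>r<n3. f (cslice n3 X (u + int r)) (cslice n3 Y (int r + c)))
       = (\<Sum>r<n3. f (cslice n3 X (u - c + int r)) (cslice n3 Y (int r)))"
proof -
  have "(\<Sum>r<n3. f (cslice n3 X (u + c - (int r + c))) (cslice n3 Y (int r + c)))
      = (\<Sum>r<n3. f (cslice n3 X (u + c - int r)) (cslice n3 Y (int r)))"
    by (rule sum_lessThan_shift_periodic[where g = "\<lambda>t. f (cslice n3 X (u + c - t)) (cslice n3 Y t)"]) simp
  then show "(\<Sum>r<n3. f (cslice n3 X (u - int r)) (cslice n3 Y (int r + c)))
       = (\<Sum>r<n3. f (cslice n3 X (u + c - int r)) (cslice n3 Y (int r)))"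
    by simp
  have "(\<Sum>r<n3. f (cslice n3 X (u - c + (int r + c))) (cslice n3 Y (int r + c)))
      = (\<Sum>r<n3. f (cslice n3 X (u - c + int r)) (cslice n3 Y (int r)))"
    by (rule sum_lessThan_shift_periodic[where g = "\<lambda>t. f (cslice n3 X (u - c + t)) (cslice n3 Y t)"]) simp
  then show "(\<Sum>r<n3. f (cslice n3 X (u + int r)) (cslice n3 Y (int r + c)))
       = (\<Sum>r<n3. f (cslice n3 X (u - c + int r)) (cslice n3 Y (int r)))"
    by simp
qed

section \<open>The block formula for bcirc_z\<close>

lemma kron_perm_P_one_carrier: "kron (perm_P m) (1\<^sub>m n) \<in> carrier_mat (n * m) (n * m)"
  by (simp add: kron_def perm_P_def mult.commute)

lemma index_mult_kron_perm_P:
  assumes B: "B \<in> carrier_mat k (n * m)" and "i < k" "q < m" "b < n"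
  shows "(B * kron (perm_P m) (1\<^sub>m n)) $$ (i, q * n + b) = B $$ (i, ((m - q) mod m) * n + b)"
proof -
  have entry: "kron (perm_P m) (1\<^sub>m n) $$ (p * n + a, q * n + b)
      = (if a = b then if p = (m - q) mod m then 1 else 0 else 0)" if "p < m" "a < n" for p a
  proof -
    have "p * n + a < m * n" "q * n + b < m * n"
      using block_index_less[OF that(2,1)] block_index_less[OF assms(4,3)] by (simp_all add: ac_simps)
    moreover have "q = (m - p) mod m \<longleftrightarrow> p = (m - q) mod m"
      using that assms(3) by (cases "p = 0"; cases "q = 0") auto
    ultimately show ?thesis
      using that assms(3,4) by (simp add: kron_def perm_P_def)
  qed
  have "(B * kron (perm_P m) (1\<^sub>m n)) $$ (i, q * n + b)
      = (\<Sum>p<m. \<Sum>a<n. B $$ (i, p * n + a) * kron (perm_P m) (1\<^sub>m n) $$ (p * n + a, q * n + b))"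
    by (rule index_mult_mat_blocks[OF B kron_perm_P_one_carrier assms(2) block_index_less[OF assms(4,3)]])
  also have "\<dots> = (\<Sum>p<m. \<Sum>a<n. if a = b then if p = (m - q) mod m then B $$ (i, p * n + a) else 0 else 0)"
    by (intro sum.cong refl) (simp add: entry)
  also have "\<dots> = B $$ (i, ((m - q) mod m) * n + b)"
    using assms(3,4) by simp
  finally show ?thesis .
qed

lemma bcirc_carrier: "bcirc n1 n2 n3 C \<in> carrier_mat (n1 * n3) (n2 * n3)"
  by (simp add: bcirc_def)

lemma index_bcirc_map:
  assumes X: "is_tensor n1 n2 n3 X" and "p < n3" "q < n3" "a < n1" "b < n2"
  shows "bcirc n1 n2 n3 (map (map_mat f) X) $$ (p * n1 + a, q * n2 + b)
       = f (cslice n3 X (int p - int q) $$ (a, b))"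
proof -
  define k where "k = nat ((int p - int q) mod int n3)"
  have "k < length X" "X ! k \<in> carrier_mat n1 n2"
    using X assms(2) by (simp_all add: k_def is_tensor_def nat_mod_less)
  then show ?thesis
    using assms(2-5) by (simp add: bcirc_def block_index_less cslice_def flip: k_def)
qed

lemma bcirc_z_carrier: "bcirc_z n1 n2 n3 X \<in> carrier_mat (n1 * n3) (n2 * n3)"
  unfolding carrier_mat_def bcirc_z_def by (simp add: bcirc_def kron_def perm_P_def ac_simps)

lemma index_bcirc_z:
  assumes X: "is_tensor n1 n2 n3 X" and "p < n3" "q < n3" "a < n1" "b < n2"
  shows "bcirc_z n1 n2 n3 X $$ (p * n1 + a, q * n2 + b)
       = quat_dpart (cslice n3 X (int p - int q) $$ (a, b))
       + quat_jpart (cslice n3 X (int p + int q) $$ (a, b))"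
proof -
  have "(bcirc n1 n2 n3 (tensor_c X) * kron (perm_P n3) (1\<^sub>m n2)) $$ (p * n1 + a, q * n2 + b)
      = bcirc n1 n2 n3 (tensor_c X) $$ (p * n1 + a, ((n3 - q) mod n3) * n2 + b)"
    using assms by (intro index_mult_kron_perm_P[OF bcirc_carrier] block_index_less)
  also have "\<dots> = quat_c (cslice n3 X (int p - int ((n3 - q) mod n3)) $$ (a, b))"
    using assms unfolding tensor_c_def by (intro index_bcirc_map) auto
  also have "\<dots> = quat_c (cslice n3 X (int p + int q) $$ (a, b))"
    using assms(3) by (simp add: cslice_cong[OF diff_reflected_index_mod])
  finally have jpart: "(bcirc n1 n2 n3 (tensor_c X) * kron (perm_P n3) (1\<^sub>m n2)) $$ (p * n1 + a, q * n2 + b)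
      = quat_c (cslice n3 X (int p + int q) $$ (a, b))" .
  have dpart: "bcirc n1 n2 n3 (tensor_d X) $$ (p * n1 + a, q * n2 + b)
      = quat_d (cslice n3 X (int p - int q) $$ (a, b))"
    using assms unfolding tensor_d_def by (intro index_bcirc_map)
  have "p * n1 + a < n1 * n3" "q * n2 + b < n2 * n3"
    using assms by (simp_all add: block_index_less)
  then show ?thesis
    using carrier_matD[OF bcirc_carrier] carrier_matD[OF kron_perm_P_one_carrier]
    by (simp add: bcirc_z_def quat_dpart_def quat_jpart_def jpart dpart)
qed

section \<open>bcirc_z is additive and multiplicative\<close>

lemma is_tensor_tensor_add:
  "is_tensor n1 n2 n3 X \<Longrightarrow> is_tensor n1 n2 n3 Y \<Longrightarrow> is_tensor n1 n2 n3 (tensor_add X Y)"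
  by (simp add: tensor_add_def is_tensor_def)

lemma cslice_tensor_add:
  "0 < n3 \<Longrightarrow> length X = n3 \<Longrightarrow> length Y = n3 \<Longrightarrow>
   cslice n3 (tensor_add X Y) k = cslice n3 X k + cslice n3 Y k"
  by (simp add: cslice_def tensor_add_def nat_mod_less)

lemma bcirc_z_tensor_add:
  assumes X: "is_tensor n1 n2 n3 X" and Y: "is_tensor n1 n2 n3 Y"
  shows "bcirc_z n1 n2 n3 (tensor_add X Y) = bcirc_z n1 n2 n3 X + bcirc_z n1 n2 n3 Y"
proof (rule eq_mat_blocksI[OF bcirc_z_carrier])
  show "bcirc_z n1 n2 n3 X + bcirc_z n1 n2 n3 Y \<in> carrier_mat (n1 * n3) (n2 * n3)"
    by (simp add: bcirc_z_carrier)
next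
  fix p a q b assume idx: "p < n3" "q < n3" "a < n1" "b < n2"
  then have "0 < n3" by simp
  then have "cslice n3 (tensor_add X Y) k $$ (a, b) = cslice n3 X k $$ (a, b) + cslice n3 Y k $$ (a, b)" for k
    using X Y carrier_matD[OF cslice_carrier[OF _ Y]] idx by (simp add: cslice_tensor_add is_tensor_def)
  then show "bcirc_z n1 n2 n3 (tensor_add X Y) $$ (p * n1 + a, q * n2 + b)
      = (bcirc_z n1 n2 n3 X + bcirc_z n1 n2 n3 Y) $$ (p * n1 + a, q * n2 + b)"
    using idx carrier_matD[OF bcirc_z_carrier]
    by (simp add: index_bcirc_z X Y is_tensor_tensor_add block_index_less)
qed

lemma is_tensor_ident_tensor: "0 < n3 \<Longrightarrow> is_tensor n n n3 (ident_tensor n n3)"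
  by (auto simp: is_tensor_def ident_tensor_def nth_Cons')

lemma cslice_ident_tensor:
  assumes "0 < n3"
  shows "cslice n3 (ident_tensor n n3) k = (if k mod int n3 = 0 then 1\<^sub>m n else 0\<^sub>m n n)"
proof -
  have "0 \<le> k mod int n3" using assms by simp
  then have "nat (k mod int n3) = 0 \<longleftrightarrow> k mod int n3 = 0" by auto
  moreover have "nat (k mod int n3) < n3"
    using assms by (simp add: nat_mod_less)
  ultimately show ?thesis
    by (auto simp: cslice_def ident_tensor_def nth_Cons')
qed

lemma bcirc_z_ident_tensor:
  assumes "0 < n3"
  shows "bcirc_z n n n3 (ident_tensor n n3) = 1\<^sub>m (n * n3)"
proof (rule eq_mat_blocksI[OF bcirc_z_carrier one_carrier_mat])
  fix p a q b assume idx: "p < n3" "q < n3" "a < n" "b < n"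
  have entry: "cslice n3 (ident_tensor n n3) k $$ (a, b) = (if k mod int n3 = 0 \<and> a = b then 1 else 0)" for k
    using assms idx by (simp add: cslice_ident_tensor)
  have "bcirc_z n n n3 (ident_tensor n n3) $$ (p * n + a, q * n + b) = (if p = q \<and> a = b then 1 else 0)"
    using assms idx by (simp add: index_bcirc_z is_tensor_ident_tensor entry diff_mod_eq_0_iff)
  also have "\<dots> = 1\<^sub>m (n * n3) $$ (p * n + a, q * n + b)"
    using idx by (simp add: block_index_less block_index_eq_iff)
  finally show "bcirc_z n n n3 (ident_tensor n n3) $$ (p * n + a, q * n + b) = 1\<^sub>m (n * n3) $$ (p * n + a, q * n + b)" .
qed

lemma unfold_t_carrier: "unfold_t n1 n2 n3 X \<in> carrier_mat (n1 * n3) n2"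
  by (simp add: unfold_t_def)

lemma is_tensor_fold_t: "is_tensor n1 n2 n3 (fold_t n1 n2 n3 M)"
  by (simp add: is_tensor_def fold_t_def)

lemma fold_unfold_t:
  assumes "is_tensor n1 n2 n3 X"
  shows "fold_t n1 n2 n3 (unfold_t n1 n2 n3 X) = X"
proof (rule nth_equalityI)
  show "length (fold_t n1 n2 n3 (unfold_t n1 n2 n3 X)) = length X"
    using assms by (simp add: fold_t_def is_tensor_def)
  fix s assume "s < length (fold_t n1 n2 n3 (unfold_t n1 n2 n3 X))"
  then have "s < n3" by (simp add: fold_t_def)
  moreover have "X ! s \<in> carrier_mat n1 n2"
    using assms \<open>s < n3\<close> by (simp add: is_tensor_def)
  ultimately show "fold_t n1 n2 n3 (unfold_t n1 n2 n3 X) ! s = X ! s"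
    by (intro eq_matI) (auto simp: fold_t_def unfold_t_def block_index_less)
qed

lemma unfold_fold_t:
  assumes "M \<in> carrier_mat (n1 * n3) n2"
  shows "unfold_t n1 n2 n3 (fold_t n1 n2 n3 M) = M"
proof (rule eq_matI)
  fix i j assume "i < dim_row M" "j < dim_col M"
  with assms obtain p a where "i = p * n1 + a" "p < n3" "a < n1" "j < n2"
    by (auto elim!: block_index_cases)
  then show "unfold_t n1 n2 n3 (fold_t n1 n2 n3 M) $$ (i, j) = M $$ (i, j)"
    by (simp add: unfold_t_def fold_t_def block_index_less)
qed (use assms in \<open>auto simp: unfold_t_def\<close>)

lemma index_cslice_fold_t:
  assumes "0 < n3" "a < n1" "b < n2"
  shows "cslice n3 (fold_t n1 n2 n3 M) k $$ (a, b) = M $$ (nat (k mod int n3) * n1 + a, b)"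
  using assms by (simp add: cslice_def fold_t_def nat_mod_less)

lemma is_tensor_qt_prod: "is_tensor n1 m n3 (qt_prod n1 n2 m n3 X Y)"
  by (simp add: qt_prod_def is_tensor_fold_t)

lemma index_cslice_qt_prod:
  assumes X: "is_tensor n1 n2 n3 X" and Y: "is_tensor n2 m n3 Y" and "0 < n3" "a < n1" "b < m"
  shows "cslice n3 (qt_prod n1 n2 m n3 X Y) k $$ (a, b)
       = (\<Sum>r<n3. \<Sum>c<n2. (quat_dpart (cslice n3 X (k - int r) $$ (a, c))
                           + quat_jpart (cslice n3 X (k + int r) $$ (a, c))) * cslice n3 Y (int r) $$ (c, b))"
proof -
  define s where "s = nat (k mod int n3)"
  have s: "s < n3" "int s = k mod int n3"
    using assms(3) by (simp_all add: s_def nat_mod_less)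
  have "cslice n3 (qt_prod n1 n2 m n3 X Y) k $$ (a, b)
      = (bcirc_z n1 n2 n3 X * unfold_t n2 m n3 Y) $$ (s * n1 + a, b)"
    using assms by (simp add: qt_prod_def index_cslice_fold_t s_def)
  also have "\<dots> = (\<Sum>r<n3. \<Sum>c<n2. bcirc_z n1 n2 n3 X $$ (s * n1 + a, r * n2 + c)
                                    * unfold_t n2 m n3 Y $$ (r * n2 + c, b))"
    by (rule index_mult_mat_blocks[OF bcirc_z_carrier unfold_t_carrier])
      (use assms s in \<open>simp_all add: block_index_less\<close>)
  also have "\<dots> = (\<Sum>r<n3. \<Sum>c<n2. (quat_dpart (cslice n3 X (k - int r) $$ (a, c))
                           + quat_jpart (cslice n3 X (k + int r) $$ (a, c))) * cslice n3 Y (int r) $$ (c, b))"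
  proof (intro sum.cong refl)
    fix r c assume "r \<in> {..<n3}" "c \<in> {..<n2}"
    moreover have "cslice n3 X (int s - int r) = cslice n3 X (k - int r)"
      "cslice n3 X (int s + int r) = cslice n3 X (k + int r)"
      by (auto intro!: cslice_cong simp: s mod_diff_left_eq mod_add_left_eq)
    ultimately show "bcirc_z n1 n2 n3 X $$ (s * n1 + a, r * n2 + c) * unfold_t n2 m n3 Y $$ (r * n2 + c, b)
        = (quat_dpart (cslice n3 X (k - int r) $$ (a, c))
          + quat_jpart (cslice n3 X (k + int r) $$ (a, c))) * cslice n3 Y (int r) $$ (c, b)"
      using assms s by (simp add: index_bcirc_z unfold_t_def block_index_less cslice_of_nat)
  qed
  finally show ?thesis .
qed

lemma bcirc_z_mult_unfold_ident:
  assumes X: "is_tensor n1 n2 n3 X"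
  shows "bcirc_z n1 n2 n3 X * unfold_t n2 n2 n3 (ident_tensor n2 n3) = unfold_t n1 n2 n3 X"
proof (rule eq_matI)
  fix i j assume "i < dim_row (unfold_t n1 n2 n3 X)" "j < dim_col (unfold_t n1 n2 n3 X)"
  then obtain p a where idx: "i = p * n1 + a" "p < n3" "a < n1" "j < n2"
    by (auto simp: unfold_t_def elim!: block_index_cases)
  then have n3: "0 < n3" by simp
  have ident: "unfold_t n2 n2 n3 (ident_tensor n2 n3) $$ (r * n2 + c, j)
      = (if c = j then if r = 0 then 1 else 0 else 0)" if "r < n3" "c < n2" for r c
    using that idx n3 by (auto simp: unfold_t_def block_index_less ident_tensor_def nth_Cons')
  have "(bcirc_z n1 n2 n3 X * unfold_t n2 n2 n3 (ident_tensor n2 n3)) $$ (i, j)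
      = (\<Sum>r<n3. \<Sum>c<n2. bcirc_z n1 n2 n3 X $$ (p * n1 + a, r * n2 + c)
                          * unfold_t n2 n2 n3 (ident_tensor n2 n3) $$ (r * n2 + c, j))"
    unfolding idx(1) by (rule index_mult_mat_blocks[OF bcirc_z_carrier unfold_t_carrier])
      (use idx in \<open>simp_all add: block_index_less\<close>)
  also have "\<dots> = (\<Sum>r<n3. \<Sum>c<n2. if c = j then if r = 0 then bcirc_z n1 n2 n3 X $$ (p * n1 + a, r * n2 + c) else 0 else 0)"
    by (intro sum.cong refl) (simp add: ident)
  also have "\<dots> = bcirc_z n1 n2 n3 X $$ (p * n1 + a, 0 * n2 + j)"
    using idx n3 by simp
  also have "\<dots> = X ! p $$ (a, j)"
    using idx n3 X by (simp only: index_bcirc_z) (simp add: quat_dpart_plus_jpart cslice_of_nat)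
  finally show "(bcirc_z n1 n2 n3 X * unfold_t n2 n2 n3 (ident_tensor n2 n3)) $$ (i, j) = unfold_t n1 n2 n3 X $$ (i, j)"
    using idx by (simp add: unfold_t_def block_index_less)
qed (simp_all add: unfold_t_def carrier_matD[OF bcirc_z_carrier])

lemma index_bcirc_z_mult:
  assumes X: "is_tensor n1 n2 n3 X" and Y: "is_tensor n2 m n3 Y"
    and "p < n3" "q < n3" "a < n1" "b < m"
  shows "(bcirc_z n1 n2 n3 X * bcirc_z n2 m n3 Y) $$ (p * n1 + a, q * m + b)
       = (\<Sum>r<n3. \<Sum>c<n2.
            (quat_dpart (cslice n3 X (int p - int r) $$ (a, c)) + quat_jpart (cslice n3 X (int p + int r) $$ (a, c)))
          * (quat_dpart (cslice n3 Y (int r - int q) $$ (c, b)) + quat_jpart (cslice n3 Y (int r + int q) $$ (c, b))))"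
proof -
  have "(bcirc_z n1 n2 n3 X * bcirc_z n2 m n3 Y) $$ (p * n1 + a, q * m + b)
      = (\<Sum>r<n3. \<Sum>c<n2. bcirc_z n1 n2 n3 X $$ (p * n1 + a, r * n2 + c) * bcirc_z n2 m n3 Y $$ (r * n2 + c, q * m + b))"
    by (rule index_mult_mat_blocks[OF bcirc_z_carrier bcirc_z_carrier])
      (use assms in \<open>simp_all add: block_index_less\<close>)
  then show ?thesis
    using assms by (simp add: index_bcirc_z)
qed

lemma bcirc_z_qt_prod:
  assumes X: "is_tensor n1 n2 n3 X" and Y: "is_tensor n2 m n3 Y"
  shows "bcirc_z n1 m n3 (qt_prod n1 n2 m n3 X Y) = bcirc_z n1 n2 n3 X * bcirc_z n2 m n3 Y"
proof (rule eq_mat_blocksI[OF bcirc_z_carrier mult_carrier_mat[OF bcirc_z_carrier bcirc_z_carrier]])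
  fix p a q b assume idx: "p < n3" "q < n3" "a < n1" "b < m"
  then have n3: "0 < n3" by simp
  define Z where "Z = qt_prod n1 n2 m n3 X Y"
  define entry_prod where "entry_prod f g A B = (\<Sum>c<n2. f (A $$ (a, c)) * g (B $$ (c, b)))"
    for f g :: "quat \<Rightarrow> quat" and A B :: "quat mat"
  let ?XY = "(bcirc_z n1 n2 n3 X * bcirc_z n2 m n3 Y) $$ (p * n1 + a, q * m + b)"
  let ?X = "cslice n3 X" and ?Y = "cslice n3 Y" and ?d = quat_dpart and ?j = quat_jpart
  note XY = index_bcirc_z_mult[OF X Y idx]
  have "?d ?XY = (\<Sum>r<n3. entry_prod ?d ?d (?X (int p - int r)) (?Y (int r - int q)))
               + (\<Sum>r<n3. entry_prod ?j ?j (?X (int p + int r)) (?Y (int r + int q)))"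
    by (simp add: XY entry_prod_def quat_dpart_sum quat_dpart_mult sum.distrib)
  also have "\<dots> = (\<Sum>r<n3. entry_prod ?d ?d (?X (int p - int q - int r)) (?Y (int r)))
                 + (\<Sum>r<n3. entry_prod ?j ?j (?X (int p - int q + int r)) (?Y (int r)))"
    using sum_cslice_shift(1)[where f = "entry_prod ?d ?d" and u = "int p" and c = "- int q"]
      sum_cslice_shift(2)[where f = "entry_prod ?j ?j" and u = "int p" and c = "int q"]
    by simp
  also have "\<dots> = ?d (cslice n3 Z (int p - int q) $$ (a, b))"
    using idx n3 X Y by (simp add: Z_def index_cslice_qt_prod entry_prod_def quat_dpart_sum quat_dpart_mult sum.distrib)
  finally have dpart: "?d ?XY = ?d (cslice n3 Z (int p - int q) $$ (a, b))" .
  have "?j ?XY = (\<Sum>r<n3. entry_prod ?d ?j (?X (int p - int r)) (?Y (int r + int q)))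
               + (\<Sum>r<n3. entry_prod ?j ?d (?X (int p + int r)) (?Y (int r - int q)))"
    by (simp add: XY entry_prod_def quat_jpart_sum quat_jpart_mult sum.distrib)
  also have "\<dots> = (\<Sum>r<n3. entry_prod ?d ?j (?X (int p + int q - int r)) (?Y (int r)))
                 + (\<Sum>r<n3. entry_prod ?j ?d (?X (int p + int q + int r)) (?Y (int r)))"
    using sum_cslice_shift(1)[where f = "entry_prod ?d ?j" and u = "int p" and c = "int q"]
      sum_cslice_shift(2)[where f = "entry_prod ?j ?d" and u = "int p" and c = "- int q"]
    by simp
  also have "\<dots> = ?j (cslice n3 Z (int p + int q) $$ (a, b))"
    using idx n3 X Y by (simp add: Z_def index_cslice_qt_prod entry_prod_def quat_jpart_sum quat_jpart_mult sum.distrib)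
  finally have jpart: "?j ?XY = ?j (cslice n3 Z (int p + int q) $$ (a, b))" .
  have "bcirc_z n1 m n3 Z $$ (p * n1 + a, q * m + b)
      = ?d (cslice n3 Z (int p - int q) $$ (a, b)) + ?j (cslice n3 Z (int p + int q) $$ (a, b))"
    using idx by (simp add: Z_def index_bcirc_z is_tensor_qt_prod)
  then show "bcirc_z n1 m n3 Z $$ (p * n1 + a, q * m + b) = ?XY"
    unfolding dpart[symmetric] jpart[symmetric] quat_dpart_plus_jpart .
qed

section \<open>Invertibility\<close>

lemma invertible_mat_iff_two_sided_inverse:
  assumes A: "A \<in> carrier_mat n n"
  shows "invertible_mat A \<longleftrightarrow> (\<exists>B \<in> carrier_mat n n. A * B = 1\<^sub>m n \<and> B * A = 1\<^sub>m n)"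
proof
  assume "invertible_mat A"
  then obtain B where AB: "A * B = 1\<^sub>m n" and BA: "B * A = 1\<^sub>m (dim_row B)"
    using A unfolding invertible_mat_def inverts_mat_def by auto
  moreover have "B \<in> carrier_mat n n"
    using arg_cong[OF AB, of dim_col] arg_cong[OF BA, of dim_col] A by auto
  ultimately show "\<exists>B \<in> carrier_mat n n. A * B = 1\<^sub>m n \<and> B * A = 1\<^sub>m n"
    by auto
qed (use A in \<open>auto simp: invertible_mat_def inverts_mat_def\<close>)

lemma qt_invertible_imp_invertible_bcirc_z:
  assumes n3: "0 < n3" and M: "is_tensor n n n3 M" and inv: "qt_invertible n n3 M"
  shows "invertible_mat (bcirc_z n n n3 M)"
proof -
  obtain N where N: "is_tensor n n n3 N" and MN: "qt_prod n n n n3 M N = ident_tensor n n3"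
    and NM: "qt_prod n n n n3 N M = ident_tensor n n3"
    using inv by (auto simp: qt_invertible_def)
  have "bcirc_z n n n3 M * bcirc_z n n n3 N = 1\<^sub>m (n * n3)"
    using bcirc_z_qt_prod[OF M N] MN bcirc_z_ident_tensor[OF n3] by simp
  moreover have "bcirc_z n n n3 N * bcirc_z n n n3 M = 1\<^sub>m (n * n3)"
    using bcirc_z_qt_prod[OF N M] NM bcirc_z_ident_tensor[OF n3] by simp
  ultimately show ?thesis
    using invertible_mat_iff_two_sided_inverse[OF bcirc_z_carrier] bcirc_z_carrier by blast
qed

lemma qt_invertible_if_bcirc_z_inverse:
  assumes n3: "0 < n3" and M: "is_tensor n n n3 M" and B: "B \<in> carrier_mat (n * n3) (n * n3)"
    and MB: "bcirc_z n n n3 M * B = 1\<^sub>m (n * n3)" and BM: "B * bcirc_z n n n3 M = 1\<^sub>m (n * n3)"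
  shows "qt_invertible n n3 M"
proof -
  let ?I = "ident_tensor n n3" and ?E = "unfold_t n n n3 (ident_tensor n n3)"
  have E: "?E \<in> carrier_mat (n * n3) n"
    by (rule unfold_t_carrier)
  have Mz: "bcirc_z n n n3 M \<in> carrier_mat (n * n3) (n * n3)"
    by (rule bcirc_z_carrier)
  have fold_E: "fold_t n n n3 ?E = ?I"
    by (rule fold_unfold_t[OF is_tensor_ident_tensor[OF n3]])
  define N where "N = fold_t n n n3 (B * ?E)"
  have N: "is_tensor n n n3 N"
    by (simp add: N_def is_tensor_fold_t)
  have "qt_prod n n n n3 M N = fold_t n n n3 ((bcirc_z n n n3 M * B) * ?E)"
    using B E Mz by (simp add: qt_prod_def N_def unfold_fold_t assoc_mult_mat)
  then have MN: "qt_prod n n n n3 M N = ?I"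
    using MB E fold_E by simp
  have "bcirc_z n n n3 N = (B * bcirc_z n n n3 M) * bcirc_z n n n3 N"
    using BM bcirc_z_carrier[of n n n3 N] by simp
  also have "\<dots> = B * (bcirc_z n n n3 M * bcirc_z n n n3 N)"
    by (rule assoc_mult_mat[OF B Mz bcirc_z_carrier])
  also have "\<dots> = B"
    using B by (simp flip: bcirc_z_qt_prod[OF M N] add: MN bcirc_z_ident_tensor[OF n3])
  finally have "qt_prod n n n n3 N M = fold_t n n n3 ((B * bcirc_z n n n3 M) * ?E)"
    using B E Mz by (simp add: qt_prod_def bcirc_z_mult_unfold_ident[OF M] assoc_mult_mat)
  then have NM: "qt_prod n n n n3 N M = ?I"
    using BM E fold_E by simp
  show ?thesis
    unfolding qt_invertible_def using N MN NM by blast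
qed

lemma qt_invertible_iff_invertible_bcirc_z:
  assumes "0 < n3" and "is_tensor n n n3 M"
  shows "qt_invertible n n3 M \<longleftrightarrow> invertible_mat (bcirc_z n n n3 M)"
  using qt_invertible_imp_invertible_bcirc_z[OF assms] qt_invertible_if_bcirc_z_inverse[OF assms]
    invertible_mat_iff_two_sided_inverse[OF bcirc_z_carrier] by blast

theorem lemma4p2:
  fixes A :: "quat mat list" and n n3 :: nat
  assumes "0 < n3" and "is_tensor n n n3 A"
  shows "qt_invertible n n3 (tensor_add (ident_tensor n n3) A)
     \<longleftrightarrow> invertible_mat (1\<^sub>m (n * n3) + bcirc_z n n n3 A)"
proof -
  have I: "is_tensor n n n3 (ident_tensor n n3)"
    by (rule is_tensor_ident_tensor[OF assms(1)])
  have "bcirc_z n n n3 (tensor_add (ident_tensor n n3) A) = 1\<^sub>m (n * n3) + bcirc_z n n n3 A"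
    using bcirc_z_tensor_add[OF I assms(2)] bcirc_z_ident_tensor[OF assms(1)] by simp
  then show ?thesis
    using qt_invertible_iff_invertible_bcirc_z[OF assms(1) is_tensor_tensor_add[OF I assms(2)]] by simp
qed

end
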